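(* Let $\mathcal X$ be a proper CAT(0) cube complex on which $G$ acts properly and cocompactly. Let $Y_1,Y_2$ be convex subcomplexes of $\mathcal X$ and let $G_i=\mathrm{Stab}_G(Y_i)$, and suppose $G_i$ acts cocompactly on $Y_i$ for $i=1,2$. Then $G_1$ and $G_2$ are commensurable if and only if the $G_1$-essential core $\widehat{Y_1}$ and the $G_2$-essential core $\widehat{Y_2}$ are parallel.
   Context: Two convex subcomplexes are parallel if exactly the same hyperplanes intersect them. A hyperplane $H$ crossing a convex subcomplex $F$ is $G'$-essential (for $G'$ preserving $F$) if for any $0$-cube $x\in F$, each halfspace of $H$ contains points of $G'x$ arbitrarily far from $H$; $G'$ acts essentially on $F$ if every hyperplane crossing $F$ is $G'$-essential. If $G'$ acts cocompactly on $F$, the $G'$-essential core $\widehat F_{G'}$ is a $G'$-invariant convex subcomplex of $F$ at finite Hausdorff distance from $F$, crossed exactly by the hyperplanes essential in $F$, on which $G'$ acts essentially and cocompactly (Caprace–Sageev); it is well defined up to parallelism. Subgroups are commensurable if their intersection has finite index in each. *)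

theory Defs
  imports "HOL-Algebra.Coset"
begin

text \<open>A CAT(0) cube complex is modelled by its 1-skeleton, a median graph
 (Chepoi/Roller/Gerasimov). Vertices = 0-cubes = the whole type 'v,
 adjacency E. Convex subcomplexes = (nonempty) geodesically convex vertex sets;
 hyperplanes = Djokovic-Winkler classes of (oriented) edges; halfspaces =
 the sets W(a,b) of vertices closer to a than to b.\<close>

definition walk :: "('v \<Rightarrow> 'v \<Rightarrow> bool) \<Rightarrow> 'v list \<Rightarrow> bool" where
  "walk E p \<longleftrightarrow> p \<noteq> [] \<and> (\<forall>i. Suc i < length p \<longrightarrow> E (p ! i) (p ! Suc i))"

definition gconnected :: "('v \<Rightarrow> 'v \<Rightarrow> bool) \<Rightarrow> bool" where
  "gconnected E \<longleftrightarrow> (\<forall>x y. \<exists>p. walk E p \<and> hd p = x \<and> last p = y)"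

definition gdist :: "('v \<Rightarrow> 'v \<Rightarrow> bool) \<Rightarrow> 'v \<Rightarrow> 'v \<Rightarrow> nat" where
  "gdist E x y = (LEAST n. \<exists>p. walk E p \<and> hd p = x \<and> last p = y \<and> length p = Suc n)"

definition interval :: "('v \<Rightarrow> 'v \<Rightarrow> bool) \<Rightarrow> 'v \<Rightarrow> 'v \<Rightarrow> 'v set" where
  "interval E x y = {z. gdist E x z + gdist E z y = gdist E x y}"

definition median_graph :: "('v \<Rightarrow> 'v \<Rightarrow> bool) \<Rightarrow> bool" where
  "median_graph E \<longleftrightarrow> (\<forall>x y. E x y \<longrightarrow> E y x) \<and> (\<forall>x. \<not> E x x) \<and> gconnected E \<and>
     (\<forall>x y z. \<exists>!m. m \<in> interval E x y \<inter> interval E y z \<inter> interval E x z)"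

text \<open>Proper (locally finite) complex.\<close>
definition locally_finite :: "('v \<Rightarrow> 'v \<Rightarrow> bool) \<Rightarrow> bool" where
  "locally_finite E \<longleftrightarrow> (\<forall>x. finite {y. E x y})"

definition convex_sub :: "('v \<Rightarrow> 'v \<Rightarrow> bool) \<Rightarrow> 'v set \<Rightarrow> bool" where
  "convex_sub E S \<longleftrightarrow> S \<noteq> {} \<and> (\<forall>x\<in>S. \<forall>y\<in>S. interval E x y \<subseteq> S)"

text \<open>Djokovic-Winkler relation and hyperplanes (as sets of oriented edges).\<close>
definition Theta :: "('v \<Rightarrow> 'v \<Rightarrow> bool) \<Rightarrow> 'v \<times> 'v \<Rightarrow> 'v \<times> 'v \<Rightarrow> bool" where
  "Theta E e f = (case e of (a,b) \<Rightarrow> case f of (c,d) \<Rightarrow>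
      gdist E a c + gdist E b d \<noteq> gdist E a d + gdist E b c)"

definition hyp_of :: "('v \<Rightarrow> 'v \<Rightarrow> bool) \<Rightarrow> 'v \<Rightarrow> 'v \<Rightarrow> ('v \<times> 'v) set" where
  "hyp_of E a b = {(c,d). E c d \<and> Theta E (a,b) (c,d)}"

definition hyperplanes :: "('v \<Rightarrow> 'v \<Rightarrow> bool) \<Rightarrow> ('v \<times> 'v) set set" where
  "hyperplanes E = {hyp_of E a b | a b. E a b}"

definition halfspace :: "('v \<Rightarrow> 'v \<Rightarrow> bool) \<Rightarrow> 'v \<Rightarrow> 'v \<Rightarrow> 'v set" where
  "halfspace E a b = {x. gdist E x a < gdist E x b}"

definition crosses :: "('v \<times> 'v) set \<Rightarrow> 'v set \<Rightarrow> bool" where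
  "crosses H F \<longleftrightarrow> (\<exists>a b. (a,b) \<in> H \<and> a \<in> F \<and> b \<in> F)"

definition parallel :: "('v \<Rightarrow> 'v \<Rightarrow> bool) \<Rightarrow> 'v set \<Rightarrow> 'v set \<Rightarrow> bool" where
  "parallel E F1 F2 \<longleftrightarrow> (\<forall>H\<in>hyperplanes E. crosses H F1 \<longleftrightarrow> crosses H F2)"

text \<open>Distance from a vertex to a set of vertices (used for distance of a point
 of one halfspace from the hyperplane, measured as distance to the opposite halfspace).\<close>
definition setdist :: "('v \<Rightarrow> 'v \<Rightarrow> bool) \<Rightarrow> 'v \<Rightarrow> 'v set \<Rightarrow> nat" where
  "setdist E x S = (LEAST n. \<exists>y\<in>S. gdist E x y = n)"

definition graph_action :: "('g, 'm) monoid_scheme \<Rightarrow> ('v \<Rightarrow> 'v \<Rightarrow> bool) \<Rightarrow> ('g \<Rightarrow> 'v \<Rightarrow> 'v) \<Rightarrow> bool" where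
  "graph_action G E \<phi> \<longleftrightarrow> group G \<and> \<phi> \<one>\<^bsub>G\<^esub> = id \<and>
     (\<forall>g\<in>carrier G. \<forall>h\<in>carrier G. \<phi> (g \<otimes>\<^bsub>G\<^esub> h) = \<phi> g \<circ> \<phi> h) \<and>
     (\<forall>g\<in>carrier G. bij (\<phi> g) \<and> (\<forall>x y. E x y \<longleftrightarrow> E (\<phi> g x) (\<phi> g y)))"

text \<open>Proper action: for every finite set of vertices K (compact sets meet finitely
 many cubes of a locally finite complex), only finitely many g move K to meet K.\<close>
definition proper_action :: "('g, 'm) monoid_scheme \<Rightarrow> ('g \<Rightarrow> 'v \<Rightarrow> 'v) \<Rightarrow> bool" where
  "proper_action G \<phi> \<longleftrightarrow> (\<forall>K. finite K \<longrightarrow> finite {g\<in>carrier G. \<phi> g ` K \<inter> K \<noteq> {}})"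

text \<open>Cocompact action of the subgroup G' on the G'-invariant subcomplex F:
 finitely many G'-orbits of vertices of F (equivalent for locally finite complexes).\<close>
definition cocompact_on :: "'g set \<Rightarrow> ('g \<Rightarrow> 'v \<Rightarrow> 'v) \<Rightarrow> 'v set \<Rightarrow> bool" where
  "cocompact_on G' \<phi> F \<longleftrightarrow> (\<forall>g\<in>G'. \<phi> g ` F = F) \<and>
     (\<exists>K. finite K \<and> K \<subseteq> F \<and> F \<subseteq> (\<Union>g\<in>G'. \<phi> g ` K))"

definition Stab :: "('g, 'm) monoid_scheme \<Rightarrow> ('g \<Rightarrow> 'v \<Rightarrow> 'v) \<Rightarrow> 'v set \<Rightarrow> 'g set" where
  "Stab G \<phi> Y = {g\<in>carrier G. \<phi> g ` Y = Y}"

definition commensurable :: "('g, 'm) monoid_scheme \<Rightarrow> 'g set \<Rightarrow> 'g set \<Rightarrow> bool" where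
  "commensurable G H K \<longleftrightarrow>
     finite (rcosets\<^bsub>G\<lparr>carrier := H\<rparr>\<^esub> (H \<inter> K)) \<and>
     finite (rcosets\<^bsub>G\<lparr>carrier := K\<rparr>\<^esub> (H \<inter> K))"

text \<open>Since H contains both
 orientations of each of its edges, both halfspaces are covered.\<close>
definition essential_hyp :: "('v \<Rightarrow> 'v \<Rightarrow> bool) \<Rightarrow> 'g set \<Rightarrow> ('g \<Rightarrow> 'v \<Rightarrow> 'v) \<Rightarrow> 'v set
    \<Rightarrow> ('v \<times> 'v) set \<Rightarrow> bool" where
  "essential_hyp E G' \<phi> F H \<longleftrightarrow> crosses H F \<and>
     (\<forall>(a,b)\<in>H. \<forall>x\<in>F. \<forall>n::nat. \<exists>g\<in>G'. \<phi> g x \<in> halfspace E a b \<and>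
         n \<le> setdist E (\<phi> g x) (halfspace E b a))"

definition acts_essentially :: "('v \<Rightarrow> 'v \<Rightarrow> bool) \<Rightarrow> 'g set \<Rightarrow> ('g \<Rightarrow> 'v \<Rightarrow> 'v) \<Rightarrow> 'v set \<Rightarrow> bool" where
  "acts_essentially E G' \<phi> F \<longleftrightarrow>
     (\<forall>H\<in>hyperplanes E. crosses H F \<longrightarrow> essential_hyp E G' \<phi> F H)"

definition finite_hausdorff :: "('v \<Rightarrow> 'v \<Rightarrow> bool) \<Rightarrow> 'v set \<Rightarrow> 'v set \<Rightarrow> bool" where
  "finite_hausdorff E A B \<longleftrightarrow> (\<exists>r. (\<forall>x\<in>A. \<exists>y\<in>B. gdist E x y \<le> r) \<and> (\<forall>y\<in>B. \<exists>x\<in>A. gdist E x y \<le> r))"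

text \<open>Z is a G'-essential core of F (well defined up to parallelism).\<close>
definition essential_core :: "('v \<Rightarrow> 'v \<Rightarrow> bool) \<Rightarrow> 'g set \<Rightarrow> ('g \<Rightarrow> 'v \<Rightarrow> 'v) \<Rightarrow> 'v set \<Rightarrow> 'v set \<Rightarrow> bool" where
  "essential_core E G' \<phi> F Z \<longleftrightarrow> convex_sub E Z \<and> Z \<subseteq> F \<and> (\<forall>g\<in>G'. \<phi> g ` Z = Z) \<and>
     finite_hausdorff E Z F \<and>
     (\<forall>H\<in>hyperplanes E. crosses H Z \<longleftrightarrow> essential_hyp E G' \<phi> F H) \<and>
     acts_essentially E G' \<phi> Z \<and> cocompact_on G' \<phi> Z"

end

(* If Stab Y1 \<inter> Stab Y2 has finite index in Stab Y1, every Stab Y1-orbit lies within bounded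
   distance of every Stab Y2-orbit, so orbit points arbitrarily deep on both sides of a hyperplane
   transfer from Y1 to Y2: the hyperplanes essential in Y1 are essential in Y2 and vice versa, and
   since an essential core is crossed exactly by the essential hyperplanes, the cores are parallel.
   Conversely, parallel convex subcomplexes are at finite Hausdorff distance: the hyperplanes
   separating a point of Z1 from its gate in Z2 miss Z2, hence Z1, and so separate Z1 from Z2.
   Hence every g1 \<in> Stab Y1 factors as g2 f with g2 \<in> Stab Y2 and f moving a base point into a
   fixed finite set; properness leaves finitely many f, hence finitely many cosets. *)

theory Submission
  imports Defs
begin

lemma walk_iff_relpowp:
  "(\<exists>p. walk E p \<and> hd p = x \<and> last p = y \<and> length p = Suc n) \<longleftrightarrow> (E ^^ n) x y"
proof
  assume "\<exists>p. walk E p \<and> hd p = x \<and> last p = y \<and> length p = Suc n"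
  then obtain p where p: "walk E p" "hd p = x" "last p = y" "length p = Suc n" by blast
  have "(nth p) 0 = x \<and> (nth p) n = y \<and> (\<forall>i<n. E (p ! i) (p ! Suc i))"
    using p by (auto simp: walk_def hd_conv_nth last_conv_nth)
  then show "(E ^^ n) x y" unfolding relpowp_fun_conv by blast
next
  assume "(E ^^ n) x y"
  then obtain f where f: "f 0 = x" "f n = y" "\<forall>i<n. E (f i) (f (Suc i))"
    unfolding relpowp_fun_conv by blast
  have "walk E (map f [0..<Suc n])"
    using f(3) by (auto simp: walk_def simp del: upt_Suc)
  moreover have "hd (map f [0..<Suc n]) = x" "last (map f [0..<Suc n]) = y"
    using f by (simp_all add: hd_map last_map del: upt_Suc)
  ultimately show "\<exists>p. walk E p \<and> hd p = x \<and> last p = y \<and> length p = Suc n"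
    by (intro exI[of _ "map f [0..<Suc n]"]) simp
qed

lemma gdist_eq_Least_relpowp: "gdist E x y = (LEAST n. (E ^^ n) x y)"
  unfolding gdist_def walk_iff_relpowp ..

locale median_graph_space =
  fixes E :: "'v \<Rightarrow> 'v \<Rightarrow> bool"
  assumes median_graph: "median_graph E"
begin

lemma edge_sym: "E x y \<Longrightarrow> E y x"
  using median_graph unfolding median_graph_def by blast

lemma edge_irrefl: "\<not> E x x"
  using median_graph unfolding median_graph_def by blast

lemma median_exists: "\<exists>m. m \<in> interval E x y \<inter> interval E y z \<inter> interval E x z"
  using median_graph unfolding median_graph_def by blast

lemma relpowp_sym: "(E ^^ n) x y \<Longrightarrow> (E ^^ n) y x"
proof (induction n arbitrary: x)
  case (Suc n)
  then obtain w where "E x w" "(E ^^ n) w y" by (blast elim: relpowp_Suc_E2)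
  then have "(E ^^ n) y w" "E w x" using Suc.IH edge_sym by blast+
  then show ?case by (rule relpowp_Suc_I)
qed simp

lemma connected: "\<exists>n. (E ^^ n) x y"
proof -
  have "gconnected E" using median_graph unfolding median_graph_def by blast
  then obtain p where "walk E p" "hd p = x" "last p = y" unfolding gconnected_def by blast
  then have "(E ^^ (length p - 1)) x y"
    using walk_iff_relpowp[of E x y "length p - 1"] by (auto simp: walk_def)
  then show ?thesis ..
qed

lemma relpowp_gdist: "(E ^^ gdist E x y) x y"
  unfolding gdist_eq_Least_relpowp using connected by (rule LeastI_ex)

lemma gdist_le: "(E ^^ n) x y \<Longrightarrow> gdist E x y \<le> n"
  unfolding gdist_eq_Least_relpowp by (rule Least_le)

lemma gdist_self [simp]: "gdist E x x = 0"
  using gdist_le[of 0 x x] by simp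

lemma gdist_eq_0_iff [simp]: "gdist E x y = 0 \<longleftrightarrow> x = y"
  using relpowp_gdist[of x y] by auto

lemma gdist_commute: "gdist E x y = gdist E y x"
  using gdist_le[OF relpowp_sym[OF relpowp_gdist[of x y]]]
    gdist_le[OF relpowp_sym[OF relpowp_gdist[of y x]]] by simp

lemma gdist_triangle: "gdist E x z \<le> gdist E x y + gdist E y z"
  using gdist_le[OF relpowp_trans[OF relpowp_gdist relpowp_gdist]] .

lemma gdist_edge: "E x y \<Longrightarrow> gdist E x y = 1"
  using gdist_le[of 1 x y] edge_irrefl[of x] by (cases "gdist E x y") auto

lemma gdist_SucE:
  assumes "gdist E x z = Suc n"
  obtains y where "E x y" "gdist E y z = n"
proof -
  obtain y where y: "E x y" "(E ^^ n) y z"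
    using relpowp_gdist[of x z] assms relpowp_Suc_D2 by metis
  have "Suc n \<le> gdist E x y + gdist E y z" using assms gdist_triangle by metis
  then have "gdist E y z = n" using gdist_le[OF y(2)] gdist_edge[OF y(1)] by linarith
  with y(1) show thesis by (rule that)
qed

lemma gdist_edge_le: "E a b \<Longrightarrow> gdist E x b \<le> Suc (gdist E x a)"
  using gdist_triangle[of x b a] gdist_edge[of a b] by simp

lemma gdist_edge_neq: "E a b \<Longrightarrow> gdist E x a \<noteq> gdist E x b"
proof -
  assume ab: "E a b"
  obtain m where m: "m \<in> interval E x a" "m \<in> interval E a b" "m \<in> interval E x b"
    using median_exists by blast
  have "gdist E a m + gdist E m b = 1" using m(2) gdist_edge[OF ab] by (simp add: interval_def)
  then have "m = a \<or> m = b" by (cases "gdist E a m") auto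
  then show ?thesis
    using m gdist_edge[OF ab] gdist_edge[OF edge_sym[OF ab]] by (auto simp: interval_def)
qed

lemma halfspace_cases: "E a b \<Longrightarrow> x \<in> halfspace E a b \<or> x \<in> halfspace E b a"
  using gdist_edge_neq[of a b x] by (auto simp: halfspace_def)

lemma gdist_halfspace: "E a b \<Longrightarrow> x \<in> halfspace E a b \<Longrightarrow> gdist E x b = Suc (gdist E x a)"
  using gdist_edge_le[of a b x] by (auto simp: halfspace_def)

lemma halfspace_disjoint: "x \<in> halfspace E a b \<Longrightarrow> x \<notin> halfspace E b a"
  by (auto simp: halfspace_def)

lemma halfspace_swap: "E a b \<Longrightarrow> x \<in> halfspace E b a \<longleftrightarrow> x \<notin> halfspace E a b"
  using halfspace_cases halfspace_disjoint by blast

lemma halfspace_nonempty: "E a b \<Longrightarrow> halfspace E a b \<noteq> {}"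
  using gdist_edge[of a b] by (auto simp: halfspace_def intro!: exI[of _ a])

lemma edge_across_in_hyp_of:
  assumes "E a b" "E p q" "p \<in> halfspace E a b" "q \<in> halfspace E b a"
  shows "(p, q) \<in> hyp_of E a b"
  using assms gdist_halfspace[of a b p] gdist_halfspace[of b a q] edge_sym
  by (auto simp: hyp_of_def Theta_def gdist_commute)

lemma hyperplane_edge: "H \<in> hyperplanes E \<Longrightarrow> (a, b) \<in> H \<Longrightarrow> E a b"
  by (auto simp: hyperplanes_def hyp_of_def)

lemma edge_in_hyp_of: "E a b \<Longrightarrow> (a, b) \<in> hyp_of E a b \<and> (b, a) \<in> hyp_of E a b"
  using gdist_edge edge_sym by (auto simp: hyp_of_def Theta_def)

lemma crosses_if_meets_both_halfspaces:
  assumes Y: "convex_sub E Y" and ab: "E a b"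
    and "p \<in> Y" "q \<in> Y" "p \<in> halfspace E a b" "q \<in> halfspace E b a"
  shows "crosses (hyp_of E a b) Y"
  using assms(3-)
proof (induction "gdist E p q" arbitrary: p)
  case 0
  then show ?case using halfspace_disjoint by fastforce
next
  case (Suc k)
  obtain p' where p': "E p p'" "gdist E p' q = k" using gdist_SucE Suc.hyps(2)[symmetric] by metis
  have "p' \<in> interval E p q" using p' Suc.hyps(2) gdist_edge by (simp add: interval_def)
  then have "p' \<in> Y" using Y Suc.prems unfolding convex_sub_def by blast
  show ?case
  proof (cases "p' \<in> halfspace E b a")
    case True
    then show ?thesis
      using edge_across_in_hyp_of[OF ab p'(1) Suc.prems(3)] Suc.prems \<open>p' \<in> Y\<close>
      unfolding crosses_def by blast
  next
    case False
    then show ?thesis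
      using Suc.hyps(1)[of p'] halfspace_cases[OF ab] p' \<open>p' \<in> Y\<close> Suc.prems by blast
  qed
qed

lemma halfspace_iff_if_not_crosses:
  assumes "convex_sub E Y" "E a b" "\<not> crosses (hyp_of E a b) Y" "x \<in> Y" "w \<in> Y"
  shows "x \<in> halfspace E a b \<longleftrightarrow> w \<in> halfspace E a b"
  using crosses_if_meets_both_halfspaces[OF assms(1,2)] halfspace_cases[OF assms(2)] assms(3-)
  by blast

lemma setdist_exists: "S \<noteq> {} \<Longrightarrow> \<exists>y\<in>S. gdist E x y = setdist E x S"
  unfolding setdist_def by (rule LeastI_ex) blast

lemma setdist_le: "y \<in> S \<Longrightarrow> setdist E x S \<le> gdist E x y"
  unfolding setdist_def by (rule Least_le) blast

lemma setdist_eq_0: "x \<in> S \<Longrightarrow> setdist E x S = 0"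
  using setdist_le[of x S x] by simp

lemma setdist_triangle: "S \<noteq> {} \<Longrightarrow> setdist E x S \<le> gdist E x y + setdist E y S"
proof -
  assume "S \<noteq> {}"
  then obtain w where "w \<in> S" "gdist E y w = setdist E y S" using setdist_exists by blast
  then show ?thesis using setdist_le[of w S x] gdist_triangle[of x w y] by linarith
qed

lemma interval_shift: "u \<in> interval E z y \<Longrightarrow> y \<in> interval E z c \<Longrightarrow> y \<in> interval E u c"
  using gdist_triangle[of z c u] gdist_triangle[of u c y] by (simp add: interval_def)

lemma convex_gate:
  assumes "convex_sub E Z"
  obtains y where "y \<in> Z" "\<forall>c\<in>Z. y \<in> interval E z c"
proof -
  obtain y where y: "y \<in> Z" "gdist E z y = setdist E z Z"
    using assms setdist_exists[of Z z] unfolding convex_sub_def by blast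
  have "y \<in> interval E z c" if c: "c \<in> Z" for c
  proof -
    txt \<open>The median of \<open>z, y, c\<close> lies in \<open>Z\<close> and on a geodesic from \<open>z\<close> to the
      nearest point \<open>y\<close>.\<close>
    obtain m where m: "m \<in> interval E z y" "m \<in> interval E y c" "m \<in> interval E z c"
      using median_exists by blast
    have "m \<in> Z" using m(2) assms y(1) c unfolding convex_sub_def by blast
    then have "gdist E z y \<le> gdist E z m" using y(2) setdist_le[of m Z z] by simp
    then have "gdist E m y = 0" using m(1) unfolding interval_def mem_Collect_eq by linarith
    then have "m = y" by simp
    then show ?thesis using m(3) by simp
  qed
  with y(1) show thesis by (rule that[rule_format])
qed

lemma hyp_of_geodesic_to_gate_not_crosses:
  assumes gate: "\<forall>c\<in>Z. y \<in> interval E z c"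
    and "u \<in> interval E z y" "u' \<in> interval E z y"
  shows "\<not> crosses (hyp_of E u u') Z"
proof
  assume "crosses (hyp_of E u u') Z"
  then obtain c c' where cc: "(c, c') \<in> hyp_of E u u'" "c \<in> Z" "c' \<in> Z"
    unfolding crosses_def by blast
  have "y \<in> interval E u c" "y \<in> interval E u c'" "y \<in> interval E u' c" "y \<in> interval E u' c'"
    using assms cc(2,3) interval_shift by blast+
  then have "gdist E u c + gdist E u' c' = gdist E u c' + gdist E u' c"
    unfolding interval_def mem_Collect_eq by linarith
  then show False using cc(1) by (simp add: hyp_of_def Theta_def)
qed

text \<open>Each hyperplane crossed by a geodesic from \<open>z \<in> Z\<^sub>1\<close> to its gate \<open>y\<close> in \<open>Z\<^sub>2\<close> misses
  \<open>Z\<^sub>2\<close>, hence also \<open>Z\<^sub>1\<close> by parallelism; so it separates \<open>Z\<^sub>1\<close> from \<open>Z\<^sub>2\<close>.\<close>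

lemma parallel_gate_geodesic_gdist:
  assumes Z1: "convex_sub E Z1" and Z2: "convex_sub E Z2" and par: "parallel E Z1 Z2"
    and "z \<in> Z1" "z0 \<in> Z1" "y0 \<in> Z2" "y \<in> Z2" and gate: "\<forall>c\<in>Z2. y \<in> interval E z c"
    and "u \<in> interval E z y"
  shows "gdist E z0 y = gdist E z0 u + gdist E u y \<and> gdist E y0 u = gdist E y0 y + gdist E u y"
  using assms(9)
proof (induction "gdist E u y" arbitrary: u)
  case 0
  then show ?case by simp
next
  case (Suc n)
  obtain u' where u': "E u u'" "gdist E u' y = n" using gdist_SucE Suc.hyps(2)[symmetric] by metis
  have zu': "gdist E z u' = Suc (gdist E z u)"
    using Suc gdist_edge_le[OF u'(1), of z] gdist_triangle[of z y u'] u'(2)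
    unfolding interval_def mem_Collect_eq by linarith
  then have "u' \<in> interval E z y" using Suc.prems Suc.hyps(2) u'(2) by (simp add: interval_def)
  then have not2: "\<not> crosses (hyp_of E u u') Z2"
    using hyp_of_geodesic_to_gate_not_crosses[OF gate Suc.prems] by blast
  then have not1: "\<not> crosses (hyp_of E u u') Z1"
    using par u'(1) unfolding parallel_def hyperplanes_def by blast
  have "z \<in> halfspace E u u'" using zu' by (simp add: halfspace_def gdist_commute)
  then have "z0 \<in> halfspace E u u'"
    using halfspace_iff_if_not_crosses[OF Z1 u'(1) not1] assms(4,5) by blast
  then have z0u': "gdist E z0 u' = Suc (gdist E z0 u)" by (rule gdist_halfspace[OF u'(1)])
  have "y \<in> halfspace E u' u" using u'(2) Suc.hyps(2) by (simp add: halfspace_def gdist_commute)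
  then have "y0 \<in> halfspace E u' u"
    using halfspace_iff_if_not_crosses[OF Z2 u'(1) not2] halfspace_swap[OF u'(1)] assms(6,7) by blast
  then have y0u: "gdist E y0 u = Suc (gdist E y0 u')" by (rule gdist_halfspace[OF edge_sym[OF u'(1)]])
  show ?case
    using Suc.hyps(1)[OF u'(2)[symmetric] \<open>u' \<in> interval E z y\<close>] u'(2) Suc.hyps(2) z0u' y0u
    by simp
qed

lemma parallel_gdist_bound:
  assumes "convex_sub E Z1" "convex_sub E Z2" "parallel E Z1 Z2"
    and "z0 \<in> Z1" "y0 \<in> Z2" "z \<in> Z1"
  shows "\<exists>y\<in>Z2. gdist E z y \<le> gdist E z0 y0"
proof -
  obtain y where y: "y \<in> Z2" and gate: "\<forall>c\<in>Z2. y \<in> interval E z c"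
    using convex_gate[OF assms(2)] by blast
  have "z \<in> interval E z y" by (simp add: interval_def)
  then have "gdist E z0 y = gdist E z0 z + gdist E z y \<and> gdist E y0 z = gdist E y0 y + gdist E z y"
    using parallel_gate_geodesic_gdist[OF assms(1-3,6,4,5) y gate] by simp
  then have "gdist E z y \<le> gdist E z0 y0"
    using gdist_triangle[of z0 y y0] gdist_triangle[of y0 z z0] gdist_commute[of y0 z0] by linarith
  with y show ?thesis ..
qed

lemma finite_gdist_ball:
  assumes "locally_finite E"
  shows "finite {v. gdist E k v \<le> R}"
proof (induction R)
  case 0
  then show ?case by simp
next
  case (Suc R)
  have "{v. gdist E k v \<le> Suc R} \<subseteq> {v. gdist E k v \<le> R} \<union> (\<Union>u\<in>{v. gdist E k v \<le> R}. {w. E u w})"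
  proof
    fix v assume "v \<in> {v. gdist E k v \<le> Suc R}"
    then consider "gdist E k v \<le> R" | "gdist E v k = Suc R" by (force simp: gdist_commute)
    then show "v \<in> {v. gdist E k v \<le> R} \<union> (\<Union>u\<in>{v. gdist E k v \<le> R}. {w. E u w})"
    proof cases
      case 2
      then obtain u where "E v u" "gdist E u k = R" by (rule gdist_SucE)
      then have "gdist E k u \<le> R" "E u v" using edge_sym gdist_commute[of k u] by auto
      then show ?thesis by blast
    qed simp
  qed
  moreover have "finite ({v. gdist E k v \<le> R} \<union> (\<Union>u\<in>{v. gdist E k v \<le> R}. {w. E u w}))"
    using Suc assms unfolding locally_finite_def by blast
  ultimately show ?case by (rule finite_subset)
qed

lemma essential_hyp_transfer:
  assumes "x \<in> Y1" and Y2: "convex_sub E Y2" and inv2: "\<forall>g\<in>S2. \<phi> g ` Y2 = Y2"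
    and close: "\<And>y. \<exists>R. \<forall>g1\<in>S1. \<exists>g2\<in>S2. gdist E (\<phi> g2 y) (\<phi> g1 x) \<le> R"
    and H: "H \<in> hyperplanes E" and ess: "essential_hyp E S1 \<phi> Y1 H"
  shows "essential_hyp E S2 \<phi> Y2 H"
proof -
  have deep: "\<exists>g\<in>S2. \<phi> g y \<in> halfspace E a b \<and> n \<le> setdist E (\<phi> g y) (halfspace E b a)"
    if ab: "(a, b) \<in> H" for a b y n
  proof -
    have Eab: "E a b" using hyperplane_edge[OF H ab] .
    obtain R where R: "\<forall>g1\<in>S1. \<exists>g2\<in>S2. gdist E (\<phi> g2 y) (\<phi> g1 x) \<le> R"
      using close by blast
    obtain g1 where g1: "g1 \<in> S1" "n + R + 1 \<le> setdist E (\<phi> g1 x) (halfspace E b a)"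
      using ess ab \<open>x \<in> Y1\<close> unfolding essential_hyp_def by fast
    obtain g2 where g2: "g2 \<in> S2" "gdist E (\<phi> g2 y) (\<phi> g1 x) \<le> R" using R g1(1) by blast
    have "n + 1 \<le> setdist E (\<phi> g2 y) (halfspace E b a)"
      using setdist_triangle[OF halfspace_nonempty[OF edge_sym[OF Eab]], of "\<phi> g1 x" "\<phi> g2 y"]
        g1(2) g2(2) gdist_commute[of "\<phi> g1 x" "\<phi> g2 y"] by linarith
    moreover have "\<phi> g2 y \<in> halfspace E a b"
      using calculation setdist_eq_0 halfspace_swap[OF edge_sym[OF Eab]] by fastforce
    ultimately show ?thesis using g2(1) by auto
  qed
  obtain a b where ab: "H = hyp_of E a b" "E a b" using H by (auto simp: hyperplanes_def)
  obtain y where "y \<in> Y2" using Y2 unfolding convex_sub_def by blast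
  obtain g g' where "g \<in> S2" "\<phi> g y \<in> halfspace E a b" "g' \<in> S2" "\<phi> g' y \<in> halfspace E b a"
    using deep[of a b _ 0] deep[of b a _ 0] edge_in_hyp_of[OF ab(2)] ab(1) by blast
  moreover have "\<phi> g y \<in> Y2" "\<phi> g' y \<in> Y2" using calculation \<open>y \<in> Y2\<close> inv2 by blast+
  ultimately have "crosses H Y2" using crosses_if_meets_both_halfspaces[OF Y2 ab(2)] ab(1) by blast
  then show ?thesis unfolding essential_hyp_def using deep by blast
qed

end

lemma rcosets_carrier_update: "rcosets\<^bsub>G\<lparr>carrier := H\<rparr>\<^esub> K = (\<lambda>h. K #>\<^bsub>G\<^esub> h) ` H"
  by (auto simp: RCOSETS_def r_coset_def)

lemma (in group) finite_rcosets_Int_if_covered: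
  assumes H: "subgroup H G" and K: "subgroup K G" and F: "finite F" "F \<subseteq> carrier G"
    and cover: "\<And>h. h \<in> H \<Longrightarrow> \<exists>k\<in>K. \<exists>f\<in>F. h = k \<otimes> f"
  shows "finite (rcosets\<^bsub>G\<lparr>carrier := H\<rparr>\<^esub> (H \<inter> K))"
proof -
  define pick where "pick f = (SOME h. h \<in> H \<and> h \<in> K #> f)" for f
  have HK: "subgroup (H \<inter> K) G" using subgroups_Inter_pair[OF H K] .
  have "(H \<inter> K) #> h \<in> (\<lambda>f. (H \<inter> K) #> pick f) ` F" if h: "h \<in> H" for h
  proof -
    obtain k f where kf: "k \<in> K" "f \<in> F" "h = k \<otimes> f" using cover[OF h] by blast
    then have "h \<in> K #> f" by (auto simp: r_coset_def)
    then have pick: "pick f \<in> H" "pick f \<in> K #> f"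
      unfolding pick_def using someI[of "\<lambda>h. h \<in> H \<and> h \<in> K #> f"] h by blast+
    have carr: "h \<in> carrier G" "f \<in> carrier G" "pick f \<in> carrier G"
      using h pick(1) kf(2) F(2) subgroup.subset[OF H] by blast+
    have "K #> h = K #> pick f"
      using repr_independence[OF \<open>h \<in> K #> f\<close> carr(2) K] repr_independence[OF pick(2) carr(2) K]
      by simp
    then have "h \<otimes> inv (pick f) \<in> K"
      using rcos_self[OF carr(1) K] subgroup.rcos_module_imp[OF K is_group carr(3)] by simp
    moreover have "h \<otimes> inv (pick f) \<in> H"
      using h pick(1) H by (simp add: subgroup.m_closed subgroup.m_inv_closed)
    ultimately have "h \<in> (H \<inter> K) #> pick f"
      using subgroup.rcos_module_rev[OF HK is_group carr(3,1)] by blast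
    then show ?thesis using repr_independence[OF _ carr(3) HK] kf(2) by auto
  qed
  then have "rcosets\<^bsub>G\<lparr>carrier := H\<rparr>\<^esub> (H \<inter> K) \<subseteq> (\<lambda>f. (H \<inter> K) #> pick f) ` F"
    unfolding rcosets_carrier_update by blast
  then show ?thesis using F(1) finite_surj by blast
qed

locale median_graph_action = median_graph_space E for E :: "'v \<Rightarrow> 'v \<Rightarrow> bool" +
  fixes G :: "('g, 'm) monoid_scheme" (structure) and \<phi> :: "'g \<Rightarrow> 'v \<Rightarrow> 'v"
  assumes graph_action: "graph_action G E \<phi>"
begin

sublocale group G
  using graph_action unfolding graph_action_def by blast

lemma action_one: "\<phi> \<one> = id"
  using graph_action unfolding graph_action_def by blast

lemma action_mult: "g \<in> carrier G \<Longrightarrow> h \<in> carrier G \<Longrightarrow> \<phi> (g \<otimes> h) = \<phi> g \<circ> \<phi> h"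
  using graph_action unfolding graph_action_def by blast

lemma action_edge_iff: "g \<in> carrier G \<Longrightarrow> E (\<phi> g x) (\<phi> g y) \<longleftrightarrow> E x y"
  using graph_action unfolding graph_action_def by blast

lemma action_inv_cancel [simp]: "g \<in> carrier G \<Longrightarrow> \<phi> (inv g) (\<phi> g x) = x"
  using action_mult[of "inv g" g] action_one by (metis comp_apply id_apply inv_closed l_inv)

lemma action_cancel_inv [simp]: "g \<in> carrier G \<Longrightarrow> \<phi> g (\<phi> (inv g) x) = x"
  using action_mult[of g "inv g"] action_one by (metis comp_apply id_apply inv_closed r_inv)

lemma relpowp_action: "g \<in> carrier G \<Longrightarrow> (E ^^ n) x y \<Longrightarrow> (E ^^ n) (\<phi> g x) (\<phi> g y)"
proof (induction n arbitrary: x)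
  case (Suc n)
  then obtain w where "E x w" "(E ^^ n) w y" by (blast elim: relpowp_Suc_E2)
  then show ?case using Suc action_edge_iff relpowp_Suc_I2 by metis
qed simp

lemma gdist_action [simp]: "g \<in> carrier G \<Longrightarrow> gdist E (\<phi> g x) (\<phi> g y) = gdist E x y"
  using gdist_le[OF relpowp_action[OF _ relpowp_gdist]] inv_closed action_inv_cancel
  by (metis le_antisym)

lemma subgroup_Stab: "subgroup (Stab G \<phi> Y) G"
proof (rule subgroupI)
  show "Stab G \<phi> Y \<subseteq> carrier G" by (auto simp: Stab_def)
  show "Stab G \<phi> Y \<noteq> {}" using action_one by (auto simp: Stab_def)
next
  fix g assume g: "g \<in> Stab G \<phi> Y"
  then have "\<phi> (inv g) ` Y = \<phi> (inv g) ` \<phi> g ` Y" by (simp add: Stab_def)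
  then show "inv g \<in> Stab G \<phi> Y" using g by (simp add: Stab_def image_image)
next
  fix g h assume "g \<in> Stab G \<phi> Y" "h \<in> Stab G \<phi> Y"
  then have g: "g \<in> carrier G" "\<phi> g ` Y = Y" and h: "h \<in> carrier G" "\<phi> h ` Y = Y"
    by (auto simp: Stab_def)
  have "\<phi> (g \<otimes> h) ` Y = \<phi> g ` \<phi> h ` Y" using g(1) h(1) by (metis action_mult image_comp)
  then show "g \<otimes> h \<in> Stab G \<phi> Y" using g h by (simp add: Stab_def)
qed

lemma orbits_close_if_finite_index:
  assumes "subgroup H G" "subgroup K G" and fin: "finite (rcosets\<^bsub>G\<lparr>carrier := H\<rparr>\<^esub> (H \<inter> K))"
  shows "\<exists>R. \<forall>h\<in>H. \<exists>k\<in>K. gdist E (\<phi> k y) (\<phi> h x) \<le> R"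
proof -
  have HK: "subgroup (H \<inter> K) G" using subgroups_Inter_pair assms(1,2) .
  obtain T where T: "T \<subseteq> H" "finite T" "(\<lambda>h. (H \<inter> K) #> h) ` H = (\<lambda>h. (H \<inter> K) #> h) ` T"
    using finite_subset_image[OF fin[unfolded rcosets_carrier_update] subset_refl] by blast
  define R where "R = Max ((\<lambda>t. gdist E y (\<phi> t x)) ` T)"
  have "\<exists>k\<in>K. gdist E (\<phi> k y) (\<phi> h x) \<le> R" if h: "h \<in> H" for h
  proof -
    obtain t where t: "t \<in> T" "(H \<inter> K) #> h = (H \<inter> K) #> t" using T(3) h by blast
    have carr: "h \<in> carrier G" "t \<in> carrier G" using h t(1) T(1) subgroup.subset assms(1) by blast+
    then have "h \<in> (H \<inter> K) #> t" using rcos_self[OF carr(1) HK] t(2) by simp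
    then obtain k where k: "k \<in> H \<inter> K" "h = k \<otimes> t" unfolding r_coset_def by blast
    then have "k \<in> carrier G" using subgroup.subset HK by blast
    then have "gdist E (\<phi> k y) (\<phi> h x) = gdist E y (\<phi> t x)" using k(2) carr(2) by (simp add: action_mult)
    also have "\<dots> \<le> R" unfolding R_def using T(2) t(1) by (simp add: Max_ge)
    finally show ?thesis using k(1) by blast
  qed
  then show ?thesis by blast
qed

lemma parallel_Stab_cover:
  assumes "locally_finite E" and proper: "proper_action G \<phi>"
    and Z1: "convex_sub E Z1" and Z2: "convex_sub E Z2" and "parallel E Z1 Z2"
    and S1: "S1 \<subseteq> carrier G" "\<forall>g\<in>S1. \<phi> g ` Z1 = Z1"
    and S2: "S2 \<subseteq> carrier G" "cocompact_on S2 \<phi> Z2"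
  shows "\<exists>F. finite F \<and> F \<subseteq> carrier G \<and> (\<forall>g1\<in>S1. \<exists>g2\<in>S2. \<exists>f\<in>F. g1 = g2 \<otimes> f)"
proof -
  obtain x0 y0 where x0: "x0 \<in> Z1" and y0: "y0 \<in> Z2" using Z1 Z2 unfolding convex_sub_def by blast
  obtain K where K: "finite K" "Z2 \<subseteq> (\<Union>g\<in>S2. \<phi> g ` K)"
    using S2(2) unfolding cocompact_on_def by blast
  define B where "B = insert x0 (\<Union>k\<in>K. {v. gdist E k v \<le> gdist E x0 y0})"
  define F where "F = {f \<in> carrier G. \<phi> f ` B \<inter> B \<noteq> {}}"
  have "finite B" unfolding B_def using K(1) finite_gdist_ball[OF assms(1)] by blast
  then have "finite F" using proper unfolding F_def proper_action_def by blast
  moreover have "\<exists>g2\<in>S2. \<exists>f\<in>F. g1 = g2 \<otimes> f" if g1: "g1 \<in> S1" for g1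
  proof -
    txt \<open>\<open>g1 x0\<close> is near some \<open>g2 k\<close>, so \<open>f = g2\<inverse> g1\<close> moves \<open>x0 \<in> B\<close> into \<open>B\<close>.\<close>
    obtain y where y: "y \<in> Z2" "gdist E (\<phi> g1 x0) y \<le> gdist E x0 y0"
      using parallel_gdist_bound[OF Z1 Z2 assms(5) x0 y0] S1(2) g1 x0 by blast
    then obtain g2 k where g2k: "g2 \<in> S2" "k \<in> K" "y = \<phi> g2 k" using K(2) by blast
    have carr: "g1 \<in> carrier G" "g2 \<in> carrier G" using g1 g2k(1) S1(1) S2(1) by blast+
    define f where "f = inv g2 \<otimes> g1"
    have f: "f \<in> carrier G" "g1 = g2 \<otimes> f" unfolding f_def using carr by (simp_all add: m_assoc[symmetric])
    have "gdist E k (\<phi> f x0) = gdist E y (\<phi> g1 x0)"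
      using gdist_action[OF carr(2), of k "\<phi> f x0", symmetric] carr g2k(3)
      by (simp add: f_def action_mult)
    then have "gdist E k (\<phi> f x0) \<le> gdist E x0 y0" using y(2) gdist_commute[of y] by simp
    then have "\<phi> f x0 \<in> B" unfolding B_def using g2k(2) by blast
    then have "f \<in> F" unfolding F_def B_def using f(1) by blast
    then show ?thesis using f(2) g2k(1) by blast
  qed
  moreover have "F \<subseteq> carrier G" unfolding F_def by blast
  ultimately show ?thesis by blast
qed

lemma crosses_core_if_finite_index:
  assumes "convex_sub E Y1" "convex_sub E Y2"
    and core1: "essential_core E (Stab G \<phi> Y1) \<phi> Y1 Z1"
    and core2: "essential_core E (Stab G \<phi> Y2) \<phi> Y2 Z2"
    and fin: "finite (rcosets\<^bsub>G\<lparr>carrier := Stab G \<phi> Y1\<rparr>\<^esub> (Stab G \<phi> Y1 \<inter> Stab G \<phi> Y2))"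
    and H: "H \<in> hyperplanes E" "crosses H Z1"
  shows "crosses H Z2"
proof -
  obtain x where "x \<in> Y1" using assms(1) unfolding convex_sub_def by blast
  have "essential_hyp E (Stab G \<phi> Y1) \<phi> Y1 H" using core1 H unfolding essential_core_def by blast
  then have "essential_hyp E (Stab G \<phi> Y2) \<phi> Y2 H"
    using essential_hyp_transfer[OF \<open>x \<in> Y1\<close> assms(2) _
        orbits_close_if_finite_index[OF subgroup_Stab subgroup_Stab fin] H(1)]
    by (auto simp: Stab_def)
  then show ?thesis using core2 H(1) unfolding essential_core_def by blast
qed

lemma finite_index_if_parallel_cores:
  assumes "locally_finite E" "proper_action G \<phi>"
    and core1: "essential_core E (Stab G \<phi> Y1) \<phi> Y1 Z1"
    and core2: "essential_core E (Stab G \<phi> Y2) \<phi> Y2 Z2"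
    and "parallel E Z1 Z2"
  shows "finite (rcosets\<^bsub>G\<lparr>carrier := Stab G \<phi> Y1\<rparr>\<^esub> (Stab G \<phi> Y1 \<inter> Stab G \<phi> Y2))"
proof -
  have "Stab G \<phi> Y1 \<subseteq> carrier G" "Stab G \<phi> Y2 \<subseteq> carrier G" by (auto simp: Stab_def)
  then obtain F where "finite F" "F \<subseteq> carrier G"
      "\<forall>g1\<in>Stab G \<phi> Y1. \<exists>g2\<in>Stab G \<phi> Y2. \<exists>f\<in>F. g1 = g2 \<otimes> f"
    using parallel_Stab_cover[OF assms(1,2) _ _ assms(5)] core1 core2 unfolding essential_core_def by metis
  then show ?thesis using finite_rcosets_Int_if_covered[OF subgroup_Stab subgroup_Stab] by blast
qed

end

theorem mainTheorem6:
  fixes G :: "'g monoid" and E :: "'v \<Rightarrow> 'v \<Rightarrow> bool" and \<phi> :: "'g \<Rightarrow> 'v \<Rightarrow> 'v"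
    and Y1 Y2 Z1 Z2 :: "'v set"
  assumes "median_graph E" and "locally_finite E"
    and "graph_action G E \<phi>" and "proper_action G \<phi>" and "cocompact_on (carrier G) \<phi> UNIV"
    and "convex_sub E Y1" and "convex_sub E Y2"
    and "cocompact_on (Stab G \<phi> Y1) \<phi> Y1" and "cocompact_on (Stab G \<phi> Y2) \<phi> Y2"
    and "essential_core E (Stab G \<phi> Y1) \<phi> Y1 Z1"
    and "essential_core E (Stab G \<phi> Y2) \<phi> Y2 Z2"
  shows "commensurable G (Stab G \<phi> Y1) (Stab G \<phi> Y2) \<longleftrightarrow> parallel E Z1 Z2"
proof -
  interpret median_graph_action E G \<phi> using assms(1,3) by unfold_locales
  show ?thesis
  proof
    assume "commensurable G (Stab G \<phi> Y1) (Stab G \<phi> Y2)"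
    then have "finite (rcosets\<^bsub>G\<lparr>carrier := Stab G \<phi> Y1\<rparr>\<^esub> (Stab G \<phi> Y1 \<inter> Stab G \<phi> Y2))"
        "finite (rcosets\<^bsub>G\<lparr>carrier := Stab G \<phi> Y2\<rparr>\<^esub> (Stab G \<phi> Y2 \<inter> Stab G \<phi> Y1))"
      unfolding commensurable_def by (simp_all add: Int_commute)
    then show "parallel E Z1 Z2"
      using crosses_core_if_finite_index[OF assms(6,7,10,11)] crosses_core_if_finite_index[OF assms(7,6,11,10)]
      unfolding parallel_def by blast
  next
    assume "parallel E Z1 Z2"
    then have "parallel E Z2 Z1" unfolding parallel_def by blast
    then show "commensurable G (Stab G \<phi> Y1) (Stab G \<phi> Y2)"
      using finite_index_if_parallel_cores[OF assms(2,4,10,11) \<open>parallel E Z1 Z2\<close>]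
        finite_index_if_parallel_cores[OF assms(2,4,11,10)]
      unfolding commensurable_def by (simp add: Int_commute)
  qed
qed

end
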